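(* If $\mathbf M\in\mathcal M_1$ and $\mathbf F(\mathbf s)\neq\mathbf M\mathbf s$, then $F_i(n;\mathbf s)\to1$ as $n\to\infty$, uniformly in $i\in\mathbb N$ and $\mathbf s\in(0,1]^{\mathbb N}$.
   Context: A GWBP/$\infty$ has types $\mathbb N=\{1,2,\dots\}$. Each particle lives one unit of time; a type-$i$ particle produces, independently of everything else, a random vector $\mathbf Z_i=(Z_{ij})_{j\in\mathbb N}$ of children, with $Z_i:=\sum_jZ_{ij}<\infty$ a.s. $\mathbf Z_i(n)=(Z_{ij}(n))_j$ is the generation-$n$ population from one type-$i$ particle. $F_i(n;\mathbf s)=\mathbb E\prod_js_j^{Z_{ij}(n)}$, $F_i(\mathbf s)=F_i(1;\mathbf s)$; "$\mathbf F(\mathbf s)\neq\mathbf M\mathbf s$" means it is not true that $F_i(\mathbf s)=\sum_jM_{ij}s_j$ for all $i,\mathbf s$. Mean matrix $\mathbf M=(M_{ij})$, $M_{ij}=\mathbb EZ_{ij}$, $M^{(n)}_{ij}=\mathbb EZ_{ij}(n)$, $M_i=\sum_jM_{ij}$. Irreducible: for all $i,j$ some $M^{(n)}_{ij}>0$; aperiodic: gcd of such $n$ is 1; then $\lim_n(M^{(n)}_{ij})^{1/n}=1/R$ for a common $R$. $\mathbf M\in\mathcal M_1$ means: (i) irreducible, aperiodic, $R=1$, 1-recurrent ($\sum_nM^{(n)}_{ij}=\infty$) and 1-positive ($\lim_nM^{(n)}_{ij}>0$ for all $i,j$); then there are positive eigenvectors $\mathbf v\mathbf M=\mathbf v$,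 $\mathbf M\mathbf u^T=\mathbf u^T$, unique up to positive multiples, normalized with $\sum_jv_ju_j=1$; (ii) $\sum_jv_j=1$ and $\sup_iu_i<\infty$; (iii) $\lim_{N\to\infty}\sup_iM_i^{-1}\sum_{j>N}M_{ij}=0$ and $\lim_{K\to\infty}\sup_iM_i^{-1}\mathbb E[Z_i;Z_i>K]=0$. *)

theory Defs
  imports "HOL-Probability.Probability"
begin

text \<open>Types are
indexed by nat (a relabelling of {1,2,...}). An offspring vector is a function
nat \<Rightarrow> nat (number of children of each type); the offspring law of a
type-i particle is the pmf P i.\<close>

definition supp :: "(nat \<Rightarrow> nat) \<Rightarrow> nat set" where
  "supp z = {j. z j \<noteq> 0}"

definition total :: "(nat \<Rightarrow> nat) \<Rightarrow> nat" where
  "total z = sum z (supp z)"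

definition children :: "(nat \<Rightarrow> nat) \<Rightarrow> nat list" where
  "children z = concat (map (\<lambda>j. replicate (z j) j) (sorted_list_of_set (supp z)))"

fun sum_indep :: "(nat \<Rightarrow> (nat \<Rightarrow> nat) pmf) \<Rightarrow> nat list \<Rightarrow> (nat \<Rightarrow> nat) pmf" where
  "sum_indep D [] = return_pmf (\<lambda>_. 0)"
| "sum_indep D (j # js) =
     map_pmf (\<lambda>(a, b). (\<lambda>k. a k + b k)) (pair_pmf (D j) (sum_indep D js))"

text \<open>Zdist P n i: law of the generation-n population vector Z_i(n) started
from one type-i particle.\<close>
fun Zdist :: "(nat \<Rightarrow> (nat \<Rightarrow> nat) pmf) \<Rightarrow> nat \<Rightarrow> nat \<Rightarrow> (nat \<Rightarrow> nat) pmf" where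
  "Zdist P 0 i = return_pmf (\<lambda>j. if j = i then 1 else 0)"
| "Zdist P (Suc n) i = bind_pmf (P i) (\<lambda>z. sum_indep (\<lambda>j. Zdist P n j) (children z))"

definition Fgen :: "(nat \<Rightarrow> (nat \<Rightarrow> nat) pmf) \<Rightarrow> nat \<Rightarrow> nat \<Rightarrow> (nat \<Rightarrow> real) \<Rightarrow> real" where
  "Fgen P n i s = measure_pmf.expectation (Zdist P n i) (\<lambda>z. \<Prod>j\<in>supp z. s j ^ z j)"

definition F1 :: "(nat \<Rightarrow> (nat \<Rightarrow> nat) pmf) \<Rightarrow> nat \<Rightarrow> (nat \<Rightarrow> real) \<Rightarrow> real" where
  "F1 P i s = Fgen P 1 i s"

definition Mmat :: "(nat \<Rightarrow> (nat \<Rightarrow> nat) pmf) \<Rightarrow> nat \<Rightarrow> nat \<Rightarrow> ennreal" where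
  "Mmat P i j = (\<integral>\<^sup>+ z. of_nat (z j) \<partial>measure_pmf (P i))"

fun Mpow :: "(nat \<Rightarrow> (nat \<Rightarrow> nat) pmf) \<Rightarrow> nat \<Rightarrow> nat \<Rightarrow> nat \<Rightarrow> ennreal" where
  "Mpow P 0 i j = (if i = j then 1 else 0)"
| "Mpow P (Suc n) i j = (\<Sum>k. Mpow P n i k * Mmat P k j)"

definition Mrow :: "(nat \<Rightarrow> (nat \<Rightarrow> nat) pmf) \<Rightarrow> nat \<Rightarrow> ennreal" where
  "Mrow P i = (\<Sum>j. Mmat P i j)"

definition in_M1 :: "(nat \<Rightarrow> (nat \<Rightarrow> nat) pmf) \<Rightarrow> bool" where
  "in_M1 P \<longleftrightarrow>
     \<comment> \<open>(i) irreducible\<close>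
     (\<forall>i j. \<exists>n. Mpow P n i j > 0) \<and>
     \<comment> \<open>aperiodic\<close>
     (\<forall>i j. Gcd {n. Mpow P n i j > 0} = 1) \<and>
     \<comment> \<open>R = 1: (M^(n)_ij)^(1/n) \<rightarrow> 1 (in particular eventually finite)\<close>
     (\<forall>i j. (\<forall>\<^sub>F n in sequentially. Mpow P n i j < \<top>) \<and>
            (\<lambda>n. root n (enn2real (Mpow P n i j))) \<longlonglongrightarrow> 1) \<and>
     \<comment> \<open>1-recurrent\<close>
     (\<forall>i j. (\<Sum>n. Mpow P n i j) = \<top>) \<and>
     \<comment> \<open>1-positive\<close>
     (\<forall>i j. \<exists>L::real. L > 0 \<and> (\<lambda>n. Mpow P n i j) \<longlonglongrightarrow> ennreal L) \<and>
     \<comment> \<open>(ii) positive left/right eigenvectors, normalised, sum v = 1, u bounded\<close>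
     (\<exists>v u :: nat \<Rightarrow> real.
        (\<forall>j. v j > 0) \<and> (\<forall>i. u i > 0) \<and>
        (\<forall>j. (\<Sum>i. ennreal (v i) * Mmat P i j) = ennreal (v j)) \<and>
        (\<forall>i. (\<Sum>j. Mmat P i j * ennreal (u j)) = ennreal (u i)) \<and>
        (\<Sum>j. ennreal (v j * u j)) = 1 \<and>
        (\<Sum>j. ennreal (v j)) = 1 \<and>
        bdd_above (range u)) \<and>
     \<comment> \<open>(iii) uniform tightness conditions; sup_i M_i^(-1) X_i \<rightarrow> 0 written as X_i \<le> eps M_i\<close>
     (\<forall>\<epsilon>::real. \<epsilon> > 0 \<longrightarrow> (\<exists>N0. \<forall>N\<ge>N0. \<forall>i.
         (\<Sum>j. if j > N then Mmat P i j else 0) \<le> ennreal \<epsilon> * Mrow P i)) \<and>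
     (\<forall>\<epsilon>::real. \<epsilon> > 0 \<longrightarrow> (\<exists>K0. \<forall>K\<ge>K0. \<forall>i.
         (\<integral>\<^sup>+ z. (if total z > K then of_nat (total z) else 0) \<partial>measure_pmf (P i))
           \<le> ennreal \<epsilon> * Mrow P i))"

end

theory Submission
  imports Defs
begin

text \<open>
  Let q_i(n) = F_i(n; 0) be the probability that the progeny of a type-i particle is extinct
  by generation n. It increases to a fixed point q = F(q), and F_i(n; s) lies between q_i(n)
  and 1 for s \<in> (0,1]^N, so it suffices to show q_i(n) \<rightarrow> 1 uniformly in i.

  For x = 1 - q the inequality 1 - \<Prod>_j (1 - x_j)^z_j \<le> \<Sum>_j z_j x_j gives x \<le> M x, and pairing
  with the left eigenvector v forces x = M x. If some x_i > 0, irreducibility makes x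
  positive everywhere; the inequality is then strict whenever a particle has two or more
  children, so every particle has at most one child, v forces all row sums M_i to be 1,
  and F is linear, a contradiction. Hence q = 1.

  For uniformity, 1 - q_i(n+1) \<le> (M (1 - q(n)))_i \<le> e M_i + \<Sum>_{j>N} M_ij, where the first N
  coordinates of 1 - q(n) are below e for large n. The bounded right eigenvector u and the
  tail condition bound the row sums M_i, and the tail condition is uniform in i.
\<close>

definition powprod :: "(nat \<Rightarrow> real) \<Rightarrow> (nat \<Rightarrow> nat) \<Rightarrow> real" where
  "powprod s z = (\<Prod>j\<in>supp z. s j ^ z j)"

lemma Fgen_eq_expectation_powprod:
  "Fgen P n i s = measure_pmf.expectation (Zdist P n i) (powprod s)"
  unfolding Fgen_def powprod_def ..

lemma supp_add: "supp (\<lambda>k. a k + b k) = supp a \<union> supp b"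
  by (auto simp: supp_def)

lemma powprod_eq_prod_superset:
  "finite U \<Longrightarrow> supp z \<subseteq> U \<Longrightarrow> powprod s z = (\<Prod>j\<in>U. s j ^ z j)"
  unfolding powprod_def by (rule prod.mono_neutral_left) (auto simp: supp_def)

lemma powprod_add:
  assumes "finite (supp a)" "finite (supp b)"
  shows "powprod s (\<lambda>k. a k + b k) = powprod s a * powprod s b"
proof -
  let ?U = "supp a \<union> supp b"
  have "powprod s (\<lambda>k. a k + b k) = (\<Prod>j\<in>?U. s j ^ (a j + b j))"
    using assms by (intro powprod_eq_prod_superset) (auto simp: supp_add)
  also have "\<dots> = (\<Prod>j\<in>?U. s j ^ a j) * (\<Prod>j\<in>?U. s j ^ b j)"
    by (simp add: power_add prod.distrib)
  also have "\<dots> = powprod s a * powprod s b"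
    using assms by (simp add: powprod_eq_prod_superset[of ?U])
  finally show ?thesis .
qed

lemma powprod_nonneg: "(\<And>j. 0 \<le> s j) \<Longrightarrow> 0 \<le> powprod s z"
  unfolding powprod_def by (intro prod_nonneg) auto

lemma powprod_le_one: "(\<And>j. 0 \<le> s j \<and> s j \<le> 1) \<Longrightarrow> powprod s z \<le> 1"
  unfolding powprod_def by (intro prod_le_1) (auto intro: power_le_one)

lemma powprod_mono: "(\<And>j. 0 \<le> s j \<and> s j \<le> t j) \<Longrightarrow> powprod s z \<le> powprod t z"
  unfolding powprod_def by (intro prod_mono power_mono conjI zero_le_power) auto

lemma integrable_powprod:
  "(\<And>j. 0 \<le> s j \<and> s j \<le> 1) \<Longrightarrow> integrable (measure_pmf p) (powprod s)"
  by (intro measure_pmf.integrable_const_bound[where B = 1])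
     (auto simp: powprod_le_one powprod_nonneg)

lemma nn_integral_powprod:
  fixes p :: "(nat \<Rightarrow> nat) pmf"
  assumes "\<And>j. 0 \<le> s j \<and> s j \<le> 1"
  shows "(\<integral>\<^sup>+z. ennreal (powprod s z) \<partial>p) = ennreal (measure_pmf.expectation p (powprod s))"
  using assms
  by (intro nn_integral_eq_integral integrable_powprod) (auto simp: powprod_nonneg)

lemma expectation_powprod_bounds:
  assumes s: "\<And>j. 0 \<le> s j \<and> s j \<le> 1"
  shows "0 \<le> measure_pmf.expectation p (powprod s) \<and> measure_pmf.expectation p (powprod s) \<le> 1"
proof
  show "0 \<le> measure_pmf.expectation p (powprod s)"
    using s by (intro integral_nonneg_AE) (auto simp: powprod_nonneg)
  have "ennreal (measure_pmf.expectation p (powprod s)) \<le> (\<integral>\<^sup>+z. 1 \<partial>p)"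
    unfolding nn_integral_powprod[OF s, symmetric] using s
    by (intro nn_integral_mono) (auto simp: powprod_le_one)
  then show "measure_pmf.expectation p (powprod s) \<le> 1"
    by (simp add: ennreal_le_1)
qed

lemma expectation_powprod_mono:
  assumes "\<And>j. 0 \<le> s j \<and> s j \<le> t j" "\<And>j. t j \<le> 1"
  shows "measure_pmf.expectation p (powprod s) \<le> measure_pmf.expectation p (powprod t)"
  using assms order_trans
  by (intro integral_mono integrable_powprod powprod_mono) blast+

lemma Fgen_bounds: "(\<And>j. 0 \<le> s j \<and> s j \<le> 1) \<Longrightarrow> 0 \<le> Fgen P n i s \<and> Fgen P n i s \<le> 1"
  unfolding Fgen_eq_expectation_powprod by (rule expectation_powprod_bounds)

lemma Fgen_0: "Fgen P 0 i s = s i"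
proof -
  have "supp (\<lambda>j. if j = i then 1 else 0 :: nat) = {i}"
    by (auto simp: supp_def)
  then show ?thesis by (simp add: Fgen_def)
qed

definition finite_supp_pmf :: "(nat \<Rightarrow> nat) pmf \<Rightarrow> bool" where
  "finite_supp_pmf p \<longleftrightarrow> (\<forall>z\<in>set_pmf p. finite (supp z))"

lemma finite_supp_pmf_sum_indep:
  "(\<And>k. k \<in> set js \<Longrightarrow> finite_supp_pmf (D k)) \<Longrightarrow> finite_supp_pmf (sum_indep D js)"
  by (induction js) (auto simp: finite_supp_pmf_def supp_def supp_add[unfolded supp_def])

lemma finite_supp_pmf_Zdist:
  assumes "\<And>i z. z \<in> set_pmf (P i) \<Longrightarrow> finite (supp z)"
  shows "finite_supp_pmf (Zdist P n i)"
proof (induction n arbitrary: i)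
  case 0
  then show ?case by (simp add: finite_supp_pmf_def supp_def)
next
  case (Suc n)
  then show ?case
    using assms finite_supp_pmf_sum_indep[of _ "\<lambda>j. Zdist P n j"]
    by (auto simp: finite_supp_pmf_def)
qed

lemma nn_integral_powprod_sum_indep:
  assumes s: "\<And>j. 0 \<le> s j" and D: "\<And>k. k \<in> set js \<Longrightarrow> finite_supp_pmf (D k)"
  shows "(\<integral>\<^sup>+z. ennreal (powprod s z) \<partial>sum_indep D js)
       = prod_list (map (\<lambda>k. \<integral>\<^sup>+z. ennreal (powprod s z) \<partial>D k) js)"
  using D
proof (induction js)
  case Nil
  then show ?case by (simp add: powprod_def supp_def)
next
  case (Cons j js)
  have fin: "finite_supp_pmf (D j)" "finite_supp_pmf (sum_indep D js)"
    using Cons.prems by (auto intro: finite_supp_pmf_sum_indep)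
  have "(\<integral>\<^sup>+z. ennreal (powprod s z) \<partial>sum_indep D (j # js))
      = (\<integral>\<^sup>+a. \<integral>\<^sup>+b. ennreal (powprod s (\<lambda>k. a k + b k)) \<partial>sum_indep D js \<partial>D j)"
    by (simp add: nn_integral_pair_pmf')
  also have "\<dots> = (\<integral>\<^sup>+a. \<integral>\<^sup>+b. ennreal (powprod s a) * ennreal (powprod s b) \<partial>sum_indep D js \<partial>D j)"
    using fin
    by (intro nn_integral_cong_AE)
       (auto simp: AE_measure_pmf_iff finite_supp_pmf_def powprod_add ennreal_mult powprod_nonneg s
             intro!: nn_integral_cong_AE)
  also have "\<dots> = (\<integral>\<^sup>+a. ennreal (powprod s a) \<partial>D j) * (\<integral>\<^sup>+b. ennreal (powprod s b) \<partial>sum_indep D js)"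
    by (simp add: nn_integral_cmult nn_integral_multc)
  finally show ?case using Cons by simp
qed

lemma prod_list_children:
  fixes f :: "nat \<Rightarrow> 'a::comm_monoid_mult"
  assumes "finite (supp z)"
  shows "prod_list (map f (children z)) = (\<Prod>j\<in>supp z. f j ^ z j)"
proof -
  have "prod_list (concat xss) = prod_list (map prod_list xss)" for xss :: "'a list list"
    by (induction xss) auto
  then show ?thesis
    unfolding children_def using assms
    by (simp add: map_concat comp_def prod_list_replicate prod.distinct_set_conv_list[symmetric])
qed

lemma Fgen_Suc:
  assumes fo: "\<And>i z. z \<in> set_pmf (P i) \<Longrightarrow> finite (supp z)"
    and s: "\<And>j. 0 \<le> s j \<and> s j \<le> 1"
  shows "Fgen P (Suc n) i s = measure_pmf.expectation (P i) (powprod (\<lambda>j. Fgen P n j s))"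
proof -
  have Fs: "\<And>j. 0 \<le> Fgen P n j s \<and> Fgen P n j s \<le> 1"
    using Fgen_bounds s by blast
  have "ennreal (Fgen P (Suc n) i s) = (\<integral>\<^sup>+w. ennreal (powprod s w) \<partial>Zdist P (Suc n) i)"
    unfolding Fgen_eq_expectation_powprod nn_integral_powprod[OF s] ..
  also have "\<dots> = (\<integral>\<^sup>+z. \<integral>\<^sup>+w. ennreal (powprod s w) \<partial>sum_indep (\<lambda>j. Zdist P n j) (children z) \<partial>P i)"
    by simp
  also have "\<dots> = (\<integral>\<^sup>+z. prod_list (map (\<lambda>k. ennreal (Fgen P n k s)) (children z)) \<partial>P i)"
    by (intro nn_integral_cong, subst nn_integral_powprod_sum_indep)
       (use s finite_supp_pmf_Zdist[OF fo] in
         \<open>auto simp: Fgen_eq_expectation_powprod nn_integral_powprod\<close>)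
  also have "\<dots> = (\<integral>\<^sup>+z. ennreal (powprod (\<lambda>j. Fgen P n j s) z) \<partial>P i)"
    using fo Fs
    by (intro nn_integral_cong_AE)
       (auto simp: AE_measure_pmf_iff prod_list_children powprod_def prod_ennreal ennreal_power)
  also have "\<dots> = ennreal (measure_pmf.expectation (P i) (powprod (\<lambda>j. Fgen P n j s)))"
    using nn_integral_powprod[OF Fs] .
  finally show ?thesis
    using Fgen_bounds[OF s] expectation_powprod_bounds[OF Fs] by (simp add: ennreal_inj)
qed

lemma one_minus_prod_le_sum:
  fixes p :: "nat \<Rightarrow> real"
  assumes "finite S" "\<And>j. j \<in> S \<Longrightarrow> 0 \<le> p j \<and> p j \<le> 1"
  shows "1 - prod p S \<le> (\<Sum>j\<in>S. 1 - p j)"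
  using assms
proof (induction S rule: finite_induct)
  case (insert a S)
  have "0 \<le> prod p S" "prod p S \<le> 1" "0 \<le> p a" "p a \<le> 1"
    using insert.prems by (auto intro!: prod_nonneg prod_le_1)
  then have "0 \<le> (1 - p a) * (1 - prod p S)" by simp
  then show ?case using insert by (simp add: algebra_simps)
qed simp

lemma one_minus_prod_less_sum:
  fixes p :: "nat \<Rightarrow> real"
  assumes S: "finite S" and p: "\<And>j. j \<in> S \<Longrightarrow> 0 \<le> p j \<and> p j \<le> 1"
    and ab: "a \<in> S" "b \<in> S" "a \<noteq> b" "p a < 1" "p b < 1"
  shows "1 - prod p S < (\<Sum>j\<in>S. 1 - p j)"
proof -
  let ?Q = "prod p (S - {a})"
  have "?Q = p b * prod p (S - {a} - {b})"
    using ab S by (subst prod.remove[of _ b]) auto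
  also have "\<dots> \<le> p b"
    using p ab by (intro mult_left_le prod_le_1) auto
  finally have "(1 - p a) * (1 - ?Q) > 0" using ab by simp
  moreover have "1 - ?Q \<le> (\<Sum>j\<in>S - {a}. 1 - p j)"
    using S p by (intro one_minus_prod_le_sum) auto
  moreover have "prod p S = p a * ?Q" "(\<Sum>j\<in>S. 1 - p j) = (1 - p a) + (\<Sum>j\<in>S - {a}. 1 - p j)"
    using S ab by (simp_all add: prod.remove sum.remove)
  ultimately show ?thesis by (simp add: algebra_simps)
qed

lemma one_minus_power_le:
  fixes x :: real
  assumes "0 \<le> x" "x \<le> 1"
  shows "1 - (1 - x) ^ k \<le> real k * x"
  using Bernoulli_inequality[of "- x" k] assms by simp

lemma one_minus_power_less:
  fixes x :: real
  assumes x: "0 < x" "x \<le> 1" and k: "2 \<le> k"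
  shows "1 - (1 - x) ^ k < real k * x"
  using k
proof (induction k rule: dec_induct)
  case base
  then show ?case using x by (simp add: power2_eq_square algebra_simps)
next
  case (step k)
  show ?case
  proof (cases "x = 1")
    case False
    then have "(1 - x) * (1 - real k * x) < (1 - x) * (1 - x) ^ k"
      using step x by (intro mult_strict_left_mono) auto
    moreover have "0 \<le> real k * x * x" using x by simp
    ultimately show ?thesis by (simp add: algebra_simps)
  qed (use step in simp)
qed

lemma one_minus_powprod_le:
  assumes "finite (supp z)" and x: "\<And>j. 0 \<le> x j \<and> x j \<le> 1"
  shows "1 - powprod (\<lambda>j. 1 - x j) z \<le> (\<Sum>j\<in>supp z. real (z j) * x j)"
proof -
  have "1 - powprod (\<lambda>j. 1 - x j) z \<le> (\<Sum>j\<in>supp z. 1 - (1 - x j) ^ z j)"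
    unfolding powprod_def using assms by (intro one_minus_prod_le_sum) (auto intro: power_le_one)
  also have "\<dots> \<le> (\<Sum>j\<in>supp z. real (z j) * x j)"
    using x by (intro sum_mono one_minus_power_le) auto
  finally show ?thesis .
qed

lemma one_minus_powprod_less:
  assumes fin: "finite (supp z)" and x: "\<And>j. 0 < x j \<and> x j \<le> 1" and t: "2 \<le> total z"
  shows "1 - powprod (\<lambda>j. 1 - x j) z < (\<Sum>j\<in>supp z. real (z j) * x j)"
proof (cases "\<exists>a\<in>supp z. \<exists>b\<in>supp z. a \<noteq> b")
  case True
  then obtain a b where ab: "a \<in> supp z" "b \<in> supp z" "a \<noteq> b" by blast
  have lt: "(1 - x j) ^ z j < 1" if "j \<in> supp z" for j
    using that x[of j] by (subst power_less_one_iff) (auto simp: supp_def)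
  have "1 - powprod (\<lambda>j. 1 - x j) z < (\<Sum>j\<in>supp z. 1 - (1 - x j) ^ z j)"
    unfolding powprod_def using fin x ab lt
    by (intro one_minus_prod_less_sum[of _ _ a b]) (auto intro: power_le_one less_imp_le)
  also have "\<dots> \<le> (\<Sum>j\<in>supp z. real (z j) * x j)"
    using x by (intro sum_mono one_minus_power_le) (auto intro: less_imp_le)
  finally show ?thesis .
next
  case False
  have "supp z \<noteq> {}" using t by (auto simp: total_def)
  with False obtain a where S: "supp z = {a}" by blast
  then have "2 \<le> z a" using t by (simp add: total_def)
  then show ?thesis
    unfolding powprod_def S using one_minus_power_less[of "x a" "z a"] x[of a] by simp
qed

lemma total_le_one_cases:
  assumes f: "finite (supp z)" and t: "total z \<le> 1"
  obtains "supp z = {}" | a where "supp z = {a}" "z a = 1"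
proof (cases "supp z = {}")
  case False
  then obtain a where a: "a \<in> supp z" by blast
  have "supp z = {a}"
  proof (rule ccontr)
    assume "supp z \<noteq> {a}"
    then obtain b where b: "b \<in> supp z" "b \<noteq> a" using a by blast
    have "z a + z b = (\<Sum>j\<in>{a, b}. z j)" using b by simp
    also have "\<dots> \<le> total z" unfolding total_def using a b f by (intro sum_mono2) auto
    finally show False using a b t by (auto simp: supp_def)
  qed
  moreover have "z a = 1" using a t calculation by (simp add: total_def supp_def)
  ultimately show thesis by (rule that(2))
qed

lemma powprod_total_le_one:
  assumes "finite (supp z)" "total z \<le> 1"
  shows "powprod s z = (1 - real (total z)) + (\<Sum>j\<in>supp z. real (z j) * s j)"
  using assms by (cases rule: total_le_one_cases) (auto simp: powprod_def total_def)

lemma suminf_swap_ennreal: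
  fixes f :: "nat \<Rightarrow> nat \<Rightarrow> ennreal"
  shows "(\<Sum>i. \<Sum>j. f i j) = (\<Sum>j. \<Sum>i. f i j)"
proof -
  have "(\<Sum>i. \<Sum>j. f i j) = (\<Sum>i. \<integral>\<^sup>+j. f i j \<partial>count_space UNIV)"
    by (simp add: nn_integral_count_space_nat)
  also have "\<dots> = (\<integral>\<^sup>+j. (\<Sum>i. f i j) \<partial>count_space UNIV)"
    by (rule nn_integral_suminf[symmetric]) auto
  also have "\<dots> = (\<Sum>j. \<Sum>i. f i j)"
    by (simp add: nn_integral_count_space_nat)
  finally show ?thesis .
qed

lemma AE_eq_of_nn_integral_eq:
  assumes [measurable]: "f \<in> borel_measurable M" "g \<in> borel_measurable M"
    and le: "AE x in M. f x \<le> g x"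
    and eq: "(\<integral>\<^sup>+x. g x \<partial>M) = (\<integral>\<^sup>+x. f x \<partial>M)" and fin: "(\<integral>\<^sup>+x. f x \<partial>M) \<noteq> \<infinity>"
  shows "AE x in M. f x = g x"
proof -
  have "AE x in M. g x \<le> f x"
  proof (rule ccontr)
    assume "\<not> (AE x in M. g x \<le> f x)"
    with le fin have "(\<integral>\<^sup>+x. f x \<partial>M) < (\<integral>\<^sup>+x. g x \<partial>M)"
      by (intro nn_integral_less) auto
    with eq show False by simp
  qed
  with le show ?thesis by eventually_elim (rule antisym)
qed

lemma suminf_eq_termwise_ennreal:
  fixes a b :: "nat \<Rightarrow> ennreal"
  assumes "\<And>i. a i \<le> b i" "(\<Sum>i. b i) = (\<Sum>i. a i)" "(\<Sum>i. a i) \<noteq> \<top>"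
  shows "a i = b i"
  using AE_eq_of_nn_integral_eq[of a "count_space UNIV" b] assms
  by (simp add: nn_integral_count_space_nat AE_count_space)

definition Mmult :: "(nat \<Rightarrow> (nat \<Rightarrow> nat) pmf) \<Rightarrow> nat \<Rightarrow> (nat \<Rightarrow> real) \<Rightarrow> ennreal" where
  "Mmult P i x = (\<Sum>j. Mmat P i j * ennreal (x j))"

lemma Mmult_eq_nn_integral:
  assumes fo: "\<And>z. z \<in> set_pmf (P i) \<Longrightarrow> finite (supp z)" and x: "\<And>j. 0 \<le> x j"
  shows "Mmult P i x = (\<integral>\<^sup>+z. ennreal (\<Sum>j\<in>supp z. real (z j) * x j) \<partial>P i)"
proof -
  have "Mmult P i x = (\<Sum>j. \<integral>\<^sup>+z. ennreal (real (z j) * x j) \<partial>P i)"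
    unfolding Mmult_def Mmat_def
    by (simp add: nn_integral_multc[symmetric] ennreal_mult x ennreal_of_nat_eq_real_of_nat)
  also have "\<dots> = (\<integral>\<^sup>+z. (\<Sum>j. ennreal (real (z j) * x j)) \<partial>P i)"
    by (rule nn_integral_suminf[symmetric]) auto
  also have "\<dots> = (\<integral>\<^sup>+z. ennreal (\<Sum>j\<in>supp z. real (z j) * x j) \<partial>P i)"
  proof (intro nn_integral_cong_AE, unfold AE_measure_pmf_iff, intro ballI)
    fix z assume "z \<in> set_pmf (P i)"
    then have "(\<Sum>j. ennreal (real (z j) * x j)) = (\<Sum>j\<in>supp z. ennreal (real (z j) * x j))"
      using fo by (intro suminf_finite) (auto simp: supp_def)
    also have "\<dots> = ennreal (\<Sum>j\<in>supp z. real (z j) * x j)"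
      using x by (intro sum_ennreal) auto
    finally show "(\<Sum>j. ennreal (real (z j) * x j)) = ennreal (\<Sum>j\<in>supp z. real (z j) * x j)" .
  qed
  finally show ?thesis .
qed

lemma Mrow_eq_nn_integral_total:
  assumes "\<And>z. z \<in> set_pmf (P i) \<Longrightarrow> finite (supp z)"
  shows "Mrow P i = (\<integral>\<^sup>+z. ennreal (real (total z)) \<partial>P i)"
proof -
  have "Mrow P i = Mmult P i (\<lambda>_. 1)"
    by (simp add: Mrow_def Mmult_def)
  also have "\<dots> = (\<integral>\<^sup>+z. ennreal (real (total z)) \<partial>P i)"
    using assms by (auto simp: Mmult_eq_nn_integral AE_measure_pmf_iff total_def intro!: nn_integral_cong_AE)
  finally show ?thesis .
qed

lemma one_minus_expectation_powprod:
  fixes p :: "(nat \<Rightarrow> nat) pmf"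
  assumes x: "\<And>j. 0 \<le> x j \<and> x j \<le> 1"
  shows "ennreal (1 - measure_pmf.expectation p (powprod (\<lambda>j. 1 - x j)))
       = (\<integral>\<^sup>+z. ennreal (1 - powprod (\<lambda>j. 1 - x j) z) \<partial>p)"
proof -
  have s: "\<And>j. 0 \<le> 1 - x j \<and> 1 - x j \<le> 1" using x by auto
  have "1 - measure_pmf.expectation p (powprod (\<lambda>j. 1 - x j))
      = measure_pmf.expectation p (\<lambda>z. 1 - powprod (\<lambda>j. 1 - x j) z)"
    using integrable_powprod[OF s] by (simp add: Bochner_Integration.integral_diff measure_pmf.prob_space)
  then show ?thesis
    using powprod_le_one[OF s] integrable_powprod[OF s]
    by (simp add: nn_integral_eq_integral)
qed

lemma one_minus_expectation_powprod_le_Mmult: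
  assumes fo: "\<And>z. z \<in> set_pmf (P i) \<Longrightarrow> finite (supp z)" and x: "\<And>j. 0 \<le> x j \<and> x j \<le> 1"
  shows "ennreal (1 - measure_pmf.expectation (P i) (powprod (\<lambda>j. 1 - x j))) \<le> Mmult P i x"
proof -
  have "Mmult P i x = (\<integral>\<^sup>+z. ennreal (\<Sum>j\<in>supp z. real (z j) * x j) \<partial>P i)"
    using fo x by (intro Mmult_eq_nn_integral) auto
  then show ?thesis
    unfolding one_minus_expectation_powprod[OF x] using x
    by (auto simp: AE_measure_pmf_iff fo one_minus_powprod_le intro!: nn_integral_mono_AE ennreal_leI)
qed

definition extinct_prob :: "(nat \<Rightarrow> (nat \<Rightarrow> nat) pmf) \<Rightarrow> nat \<Rightarrow> nat \<Rightarrow> real" where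
  "extinct_prob P n i = Fgen P n i (\<lambda>_. 0)"

definition extinct_prob_lim :: "(nat \<Rightarrow> (nat \<Rightarrow> nat) pmf) \<Rightarrow> nat \<Rightarrow> real" where
  "extinct_prob_lim P i = (SUP n. extinct_prob P n i)"

context
  fixes P :: "nat \<Rightarrow> (nat \<Rightarrow> nat) pmf"
  assumes finite_offspring: "\<And>i z. z \<in> set_pmf (P i) \<Longrightarrow> finite (supp z)"
begin

lemma extinct_prob_bounds: "0 \<le> extinct_prob P n i \<and> extinct_prob P n i \<le> 1"
  unfolding extinct_prob_def by (rule Fgen_bounds) auto

lemma extinct_prob_Suc:
  "extinct_prob P (Suc n) i = measure_pmf.expectation (P i) (powprod (extinct_prob P n))"
  unfolding extinct_prob_def using Fgen_Suc[OF finite_offspring, where s = "\<lambda>_. 0"]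
  by (simp add: extinct_prob_def[abs_def])

lemma extinct_prob_le_Fgen:
  "(\<And>j. 0 \<le> s j \<and> s j \<le> 1) \<Longrightarrow> extinct_prob P n i \<le> Fgen P n i s"
  unfolding extinct_prob_def Fgen_eq_expectation_powprod by (intro expectation_powprod_mono) auto

lemma abs_Fgen_minus_one_le:
  assumes s: "\<And>j. 0 \<le> s j \<and> s j \<le> 1"
  shows "\<bar>Fgen P n i s - 1\<bar> \<le> 1 - extinct_prob P n i"
proof -
  have "extinct_prob P n i \<le> Fgen P n i s"
    by (rule extinct_prob_le_Fgen) (rule s)
  moreover have "Fgen P n i s \<le> 1"
    using Fgen_bounds s by blast
  ultimately show ?thesis by linarith
qed

lemma incseq_extinct_prob: "incseq (\<lambda>n. extinct_prob P n i)"
proof (rule incseq_SucI)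
  show "extinct_prob P n i \<le> extinct_prob P (Suc n) i" for n
  proof (induction n arbitrary: i)
    case 0
    then show ?case using extinct_prob_bounds by (simp add: extinct_prob_def Fgen_0)
  next
    case (Suc n)
    have "measure_pmf.expectation (P i) (powprod (extinct_prob P n))
        \<le> measure_pmf.expectation (P i) (powprod (extinct_prob P (Suc n)))"
      using Suc.IH extinct_prob_bounds by (intro expectation_powprod_mono) auto
    then show ?case by (simp only: extinct_prob_Suc)
  qed
qed

lemma LIMSEQ_extinct_prob: "(\<lambda>n. extinct_prob P n i) \<longlonglongrightarrow> extinct_prob_lim P i"
  unfolding extinct_prob_lim_def using extinct_prob_bounds incseq_extinct_prob
  by (intro LIMSEQ_incseq_SUP) (auto simp: bdd_above_def)

lemma extinct_prob_lim_bounds: "0 \<le> extinct_prob_lim P i \<and> extinct_prob_lim P i \<le> 1"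
  using extinct_prob_bounds
  by (auto intro: LIMSEQ_le_const[OF LIMSEQ_extinct_prob] LIMSEQ_le_const2[OF LIMSEQ_extinct_prob])

lemma extinct_prob_lim_fixpoint:
  "extinct_prob_lim P i = measure_pmf.expectation (P i) (powprod (extinct_prob_lim P))"
proof -
  have "(\<lambda>n. measure_pmf.expectation (P i) (powprod (extinct_prob P n)))
          \<longlonglongrightarrow> measure_pmf.expectation (P i) (powprod (extinct_prob_lim P))"
  proof (rule integral_dominated_convergence[where w = "\<lambda>_. 1"])
    show "AE z in P i. (\<lambda>n. powprod (extinct_prob P n) z) \<longlonglongrightarrow> powprod (extinct_prob_lim P) z"
      unfolding powprod_def by (auto intro!: tendsto_prod tendsto_power LIMSEQ_extinct_prob)
    show "AE z in P i. norm (powprod (extinct_prob P n) z) \<le> 1" for n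
      using extinct_prob_bounds by (auto simp: powprod_le_one powprod_nonneg)
  qed auto
  then have "(\<lambda>n. extinct_prob P (Suc n) i)
               \<longlonglongrightarrow> measure_pmf.expectation (P i) (powprod (extinct_prob_lim P))"
    by (simp add: extinct_prob_Suc)
  moreover have "(\<lambda>n. extinct_prob P (Suc n) i) \<longlonglongrightarrow> extinct_prob_lim P i"
    using LIMSEQ_extinct_prob by (rule LIMSEQ_Suc)
  ultimately show ?thesis using LIMSEQ_unique by blast
qed

end

lemma ennreal_le_suminf_term: "(f :: nat \<Rightarrow> ennreal) i \<le> (\<Sum>j. f j)"
  using sum_le_suminf[of f "{i}"] by auto

context
  fixes P :: "nat \<Rightarrow> (nat \<Rightarrow> nat) pmf" and v :: "nat \<Rightarrow> real"
  assumes v_pos: "\<And>j. v j > 0"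
    and v_left_eigen: "\<And>j. (\<Sum>i. ennreal (v i) * Mmat P i j) = ennreal (v j)"
    and v_sum: "(\<Sum>j. ennreal (v j)) = 1"
begin

lemma left_eigen_Mmult: "(\<Sum>i. ennreal (v i) * Mmult P i x) = (\<Sum>j. ennreal (v j) * ennreal (x j))"
proof -
  have "(\<Sum>i. ennreal (v i) * Mmult P i x) = (\<Sum>i. \<Sum>j. ennreal (v i) * Mmat P i j * ennreal (x j))"
    unfolding Mmult_def by (simp add: mult.assoc)
  also have "\<dots> = (\<Sum>j. \<Sum>i. ennreal (v i) * Mmat P i j * ennreal (x j))"
    by (rule suminf_swap_ennreal)
  also have "\<dots> = (\<Sum>j. (\<Sum>i. ennreal (v i) * Mmat P i j) * ennreal (x j))"
    by simp
  finally show ?thesis by (simp add: v_left_eigen)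
qed

lemma left_eigen_Mrow: "(\<Sum>i. ennreal (v i) * Mrow P i) = 1"
  using left_eigen_Mmult[of "\<lambda>_. 1"] v_sum by (simp add: Mmult_def Mrow_def)

lemma Mrow_neq_top: "Mrow P i \<noteq> \<top>"
proof
  assume "Mrow P i = \<top>"
  moreover have "ennreal (v i) * Mrow P i \<le> 1"
    using ennreal_le_suminf_term[of "\<lambda>i. ennreal (v i) * Mrow P i" i] left_eigen_Mrow by simp
  ultimately show False using v_pos[of i] by (simp add: ennreal_mult_top top_unique)
qed

text \<open>Pairing with the positive left eigenvector v turns the subinvariance x \<le> M x into
  equality, since both sides have the same finite v-weighted sum.\<close>
lemma Mmult_eq_of_le:
  assumes x: "\<And>j. 0 \<le> x j \<and> x j \<le> 1" and le: "\<And>k. ennreal (x k) \<le> Mmult P k x"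
  shows "ennreal (x k) = Mmult P k x"
proof -
  have "ennreal (v k) * ennreal (x k) \<le> ennreal (v k) * 1" for k
    using x by (intro mult_left_mono) (auto simp: ennreal_le_1)
  then have "(\<Sum>k. ennreal (v k) * ennreal (x k)) \<le> (\<Sum>k. ennreal (v k))"
    by (intro suminf_le) auto
  then have fin: "(\<Sum>k. ennreal (v k) * ennreal (x k)) \<noteq> \<top>"
    using v_sum by (auto simp: top_unique)
  have "ennreal (v k) * ennreal (x k) = ennreal (v k) * Mmult P k x"
  proof (rule suminf_eq_termwise_ennreal)
    show "ennreal (v k) * ennreal (x k) \<le> ennreal (v k) * Mmult P k x" for k
      using le by (rule mult_left_mono) simp
    show "(\<Sum>k. ennreal (v k) * Mmult P k x) = (\<Sum>k. ennreal (v k) * ennreal (x k))"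
      by (rule left_eigen_Mmult)
  qed (rule fin)
  then show ?thesis using v_pos[of k] by (simp add: ennreal_mult_cancel_left)
qed

lemma Mrow_eq_one_of_total_le_one:
  assumes fo: "\<And>i z. z \<in> set_pmf (P i) \<Longrightarrow> finite (supp z)"
    and total_le: "\<And>i z. z \<in> set_pmf (P i) \<Longrightarrow> total z \<le> 1"
  shows "Mrow P k = 1"
proof -
  have le: "Mrow P i \<le> 1" for i
  proof -
    have "Mrow P i = (\<integral>\<^sup>+z. ennreal (real (total z)) \<partial>P i)"
      using fo by (rule Mrow_eq_nn_integral_total)
    also have "\<dots> \<le> (\<integral>\<^sup>+z. 1 \<partial>P i)"
      using total_le by (intro nn_integral_mono_AE) (auto simp: AE_measure_pmf_iff)
    finally show ?thesis by simp
  qed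
  have "ennreal (v k) * Mrow P k = ennreal (v k) * 1"
  proof (rule suminf_eq_termwise_ennreal)
    show "ennreal (v i) * Mrow P i \<le> ennreal (v i) * 1" for i
      using le by (rule mult_left_mono) simp
  qed (simp_all add: left_eigen_Mrow v_sum)
  then show ?thesis using v_pos[of k] by (simp add: ennreal_mult_cancel_left del: mult_1_right)
qed

end

lemma Mmult_pos_propagate:
  assumes fixed: "\<And>k. ennreal (x k) = Mmult P k x"
  shows "Mpow P n i j > 0 \<Longrightarrow> x j > 0 \<Longrightarrow> x i > 0"
proof (induction n arbitrary: j)
  case 0
  then show ?case by (cases "i = j") auto
next
  case (Suc n)
  have "\<exists>k. Mpow P n i k * Mmat P k j \<noteq> 0"
  proof (rule ccontr)
    assume "\<nexists>k. Mpow P n i k * Mmat P k j \<noteq> 0"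
    then have "(\<lambda>k. Mpow P n i k * Mmat P k j) = (\<lambda>_. 0)" by blast
    with Suc.prems(1) show False by simp
  qed
  then obtain k where k: "Mpow P n i k \<noteq> 0" "Mmat P k j \<noteq> 0" by auto
  then have "0 < Mmat P k j * ennreal (x j)"
    using Suc.prems(2) by (metis ennreal_eq_0_iff mult_eq_0_iff not_le zero_less_iff_neq_zero)
  also have "\<dots> \<le> Mmult P k x"
    unfolding Mmult_def by (rule ennreal_le_suminf_term)
  also have "\<dots> = ennreal (x k)"
    by (rule fixed[symmetric])
  finally have "0 < x k" by (simp add: ennreal_less_zero_iff)
  then show ?case by (metis Suc.IH k(1) zero_less_iff_neq_zero)
qed

lemma F1_eq_expectation_powprod:
  assumes "\<And>i z. z \<in> set_pmf (P i) \<Longrightarrow> finite (supp z)" "\<And>j. 0 \<le> s j \<and> s j \<le> 1"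
  shows "F1 P i s = measure_pmf.expectation (P i) (powprod s)"
  using Fgen_Suc[OF assms, where n = 0] by (simp add: F1_def Fgen_0)

lemma F1_eq_Mmult_of_total_eq_one:
  assumes fo: "\<And>i z. z \<in> set_pmf (P i) \<Longrightarrow> finite (supp z)"
    and total_le: "\<And>z. z \<in> set_pmf (P i) \<Longrightarrow> total z \<le> 1" and row: "Mrow P i = 1"
    and s: "\<And>j. 0 \<le> s j \<and> s j \<le> 1"
  shows "ennreal (F1 P i s) = Mmult P i s"
proof -
  have "AE z in P i. ennreal (real (total z)) = 1"
    using total_le row Mrow_eq_nn_integral_total[of P i] fo
    by (intro AE_eq_of_nn_integral_eq) (auto simp: AE_measure_pmf_iff)
  then have "AE z in P i. ennreal (powprod s z) = ennreal (\<Sum>j\<in>supp z. real (z j) * s j)"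
    by (auto simp: AE_measure_pmf_iff fo powprod_total_le_one total_le)
  then have "(\<integral>\<^sup>+z. ennreal (powprod s z) \<partial>P i) = Mmult P i s"
    using fo s by (simp add: Mmult_eq_nn_integral nn_integral_cong_AE)
  then show ?thesis
    using fo s by (simp add: F1_eq_expectation_powprod nn_integral_powprod)
qed

text \<open>Both sides of the pointwise inequality 1 - \<Prod>_j (1 - x_j)^z_j \<le> \<Sum>_j z_j x_j integrate to x_k,
  so it is an equality almost surely; but it is strict when z has two or more children.\<close>
lemma total_le_one_of_Mmult_fixed:
  assumes fo: "\<And>z. z \<in> set_pmf (P k) \<Longrightarrow> finite (supp z)"
    and x: "\<And>j. 0 < x j \<and> x j \<le> 1"
    and gen: "ennreal (1 - measure_pmf.expectation (P k) (powprod (\<lambda>j. 1 - x j))) = ennreal (x k)"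
    and fixed: "ennreal (x k) = Mmult P k x"
    and z: "z \<in> set_pmf (P k)"
  shows "total z \<le> 1"
proof (rule ccontr)
  assume "\<not> total z \<le> 1"
  then have strict: "1 - powprod (\<lambda>j. 1 - x j) z < (\<Sum>j\<in>supp z. real (z j) * x j)"
    using fo[OF z] x by (intro one_minus_powprod_less) auto
  have x01: "\<And>j. 0 \<le> x j \<and> x j \<le> 1" using x by (auto intro: less_imp_le)
  have lhs: "(\<integral>\<^sup>+z. ennreal (1 - powprod (\<lambda>j. 1 - x j) z) \<partial>P k) = ennreal (x k)"
    unfolding gen[symmetric] by (rule one_minus_expectation_powprod[OF x01, symmetric])
  have rhs: "(\<integral>\<^sup>+z. ennreal (\<Sum>j\<in>supp z. real (z j) * x j) \<partial>P k) = ennreal (x k)"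
    unfolding fixed using fo x01 by (intro Mmult_eq_nn_integral[symmetric]) auto
  have "AE z in P k. ennreal (1 - powprod (\<lambda>j. 1 - x j) z) = ennreal (\<Sum>j\<in>supp z. real (z j) * x j)"
  proof (rule AE_eq_of_nn_integral_eq)
    show "AE z in P k. ennreal (1 - powprod (\<lambda>j. 1 - x j) z) \<le> ennreal (\<Sum>j\<in>supp z. real (z j) * x j)"
      using fo x01 by (auto simp: AE_measure_pmf_iff intro!: ennreal_leI one_minus_powprod_le)
  qed (simp_all add: lhs rhs)
  then have "ennreal (1 - powprod (\<lambda>j. 1 - x j) z) = ennreal (\<Sum>j\<in>supp z. real (z j) * x j)"
    using z by (simp add: AE_measure_pmf_iff)
  moreover have "0 \<le> 1 - powprod (\<lambda>j. 1 - x j) z"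
    using x01 by (simp add: powprod_le_one)
  ultimately show False
    using strict by (simp add: ennreal_inj sum_nonneg x01)
qed

theorem extinct_prob_lim_eq_one:
  assumes fo: "\<And>i z. z \<in> set_pmf (P i) \<Longrightarrow> finite (supp z)"
    and irreducible: "\<And>i j. \<exists>n. Mpow P n i j > 0"
    and v_pos: "\<And>j. v j > 0"
    and v_left_eigen: "\<And>j. (\<Sum>i. ennreal (v i) * Mmat P i j) = ennreal (v j)"
    and v_sum: "(\<Sum>j. ennreal (v j)) = 1"
    and nonlinear: "\<not> (\<forall>i s. (\<forall>j. 0 \<le> s j \<and> s j \<le> 1) \<longrightarrow>
                         ennreal (F1 P i s) = (\<Sum>j. Mmat P i j * ennreal (s j)))"
  shows "extinct_prob_lim P i = 1"
proof (rule ccontr)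
  assume "extinct_prob_lim P i \<noteq> 1"
  define x where "x j = 1 - extinct_prob_lim P j" for j
  have x01: "\<And>j. 0 \<le> x j \<and> x j \<le> 1"
    using extinct_prob_lim_bounds[OF fo] by (auto simp: x_def)
  have gen: "ennreal (1 - measure_pmf.expectation (P k) (powprod (\<lambda>j. 1 - x j))) = ennreal (x k)" for k
    using extinct_prob_lim_fixpoint[OF fo, where i = k] by (simp add: x_def)
  have fixed: "ennreal (x k) = Mmult P k x" for k
  proof (rule Mmult_eq_of_le[OF v_pos v_left_eigen v_sum x01])
    show "ennreal (x k) \<le> Mmult P k x" for k
      unfolding gen[symmetric] using fo x01 by (intro one_minus_expectation_powprod_le_Mmult) auto
  qed
  have "x i > 0"
    using x01[of i] \<open>extinct_prob_lim P i \<noteq> 1\<close> by (auto simp: x_def)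
  then have x_pos: "x k > 0" for k
    using irreducible[of k i] Mmult_pos_propagate[OF fixed] by blast
  have x_pos01: "0 < x j \<and> x j \<le> 1" for j
    using x_pos x01 by auto
  have total_le: "total z \<le> 1" if "z \<in> set_pmf (P k)" for k z
    by (rule total_le_one_of_Mmult_fixed[OF fo[where i = k] x_pos01 gen fixed that])
  have "Mrow P k = 1" for k
    using v_pos v_left_eigen v_sum fo total_le by (rule Mrow_eq_one_of_total_le_one)
  then have "ennreal (F1 P k s) = Mmult P k s" if "\<forall>j. 0 \<le> s j \<and> s j \<le> 1" for k s
    using fo total_le that by (intro F1_eq_Mmult_of_total_eq_one) auto
  with nonlinear show False
    by (simp add: Mmult_def)
qed

definition Mtail :: "(nat \<Rightarrow> (nat \<Rightarrow> nat) pmf) \<Rightarrow> nat \<Rightarrow> nat \<Rightarrow> ennreal" where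
  "Mtail P N i = (\<Sum>j. if j > N then Mmat P i j else 0)"

lemma Mrow_eq_head_plus_Mtail: "Mrow P i = (\<Sum>j\<le>N. Mmat P i j) + Mtail P N i"
proof -
  have "(\<Sum>j\<le>N. Mmat P i j) = (\<Sum>j. if j \<le> N then Mmat P i j else 0)"
    by (subst suminf_finite[of "{..N}"]) auto
  then have "(\<Sum>j\<le>N. Mmat P i j) + Mtail P N i
      = (\<Sum>j. (if j \<le> N then Mmat P i j else 0) + (if j > N then Mmat P i j else 0))"
    unfolding Mtail_def by (simp add: suminf_add)
  also have "\<dots> = Mrow P i"
    unfolding Mrow_def by (intro arg_cong[where f = suminf] ext) auto
  finally show ?thesis ..
qed

lemma Mrow_le_of_head_le:
  assumes tail: "Mtail P N i \<le> ennreal (1/2) * Mrow P i" and finite_row: "Mrow P i \<noteq> \<top>"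
    and head: "ennreal d * (\<Sum>j\<le>N. Mmat P i j) \<le> ennreal U" and "d > 0" "U \<ge> 0"
  shows "Mrow P i \<le> ennreal (2 * U / d)"
proof -
  let ?A = "\<Sum>j\<le>N. Mmat P i j"
  obtain r where r: "Mrow P i = ennreal r" "0 \<le> r"
    using finite_row by (cases "Mrow P i") auto
  obtain a where a: "?A = ennreal a" "0 \<le> a"
    using Mrow_eq_head_plus_Mtail[of P i N] r by (cases ?A) (auto simp: top_unique)
  obtain t where t: "Mtail P N i = ennreal t" "0 \<le> t"
    using Mrow_eq_head_plus_Mtail[of P i N] r by (cases "Mtail P N i") (auto simp: top_unique)
  have "ennreal r = ennreal (a + t)"
    using Mrow_eq_head_plus_Mtail[of P i N] r a t by (simp add: ennreal_plus)
  then have "r = a + t" using r a t by (simp del: ennreal_plus)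
  moreover have "ennreal t \<le> ennreal (1/2 * r)"
    using tail r(2) by (simp only: r(1) t(1) ennreal_mult[of "1/2" r])
  then have "t \<le> r / 2" using r by (subst (asm) ennreal_le_iff) auto
  ultimately have "r \<le> 2 * a" by linarith
  have "ennreal (d * a) \<le> ennreal U"
    using head a(2) \<open>d > 0\<close> by (simp only: a(1) ennreal_mult[of d a])
  then have "d * a \<le> U" using \<open>U \<ge> 0\<close> by (subst (asm) ennreal_le_iff) auto
  have "r * d \<le> 2 * a * d"
    using \<open>r \<le> 2 * a\<close> \<open>d > 0\<close> by (intro mult_right_mono) auto
  also have "\<dots> \<le> 2 * U"
    using \<open>d * a \<le> U\<close> by (simp add: mult.assoc mult.commute[of a d])
  finally show ?thesis
    using r \<open>d > 0\<close> by (simp add: ennreal_leI pos_le_divide_eq)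
qed

text \<open>Since M u = u, the head \<Sum>_{j \<le> N} M_ij is at most sup u / min_{j \<le> N} u_j.\<close>
lemma Mrow_bounded:
  assumes u_pos: "\<And>i. u i > 0"
    and u_right_eigen: "\<And>i. (\<Sum>j. Mmat P i j * ennreal (u j)) = ennreal (u i)"
    and u_bdd: "bdd_above (range u)"
    and tail: "\<And>i. Mtail P N i \<le> ennreal (1/2) * Mrow P i"
    and finite_row: "\<And>i. Mrow P i \<noteq> \<top>"
  shows "\<exists>B>0. \<forall>i. Mrow P i \<le> ennreal B"
proof -
  obtain U where U: "\<And>i. u i \<le> U" using u_bdd by (auto simp: bdd_above_def)
  define d where "d = Min (u ` {..N})"
  have d_pos: "d > 0" unfolding d_def using u_pos by (subst Min_gr_iff) auto
  have U_pos: "U > 0" using U[of 0] u_pos[of 0] by simp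
  have head: "ennreal d * (\<Sum>j\<le>N. Mmat P i j) \<le> ennreal U" for i
  proof -
    have "ennreal d * (\<Sum>j\<le>N. Mmat P i j) = (\<Sum>j\<le>N. Mmat P i j * ennreal d)"
      by (simp add: sum_distrib_left mult.commute)
    also have "\<dots> \<le> (\<Sum>j\<le>N. Mmat P i j * ennreal (u j))"
    proof (rule sum_mono)
      fix j assume "j \<in> {..N}"
      then have "d \<le> u j" unfolding d_def by (intro Min_le) auto
      then show "Mmat P i j * ennreal d \<le> Mmat P i j * ennreal (u j)"
        by (intro mult_left_mono ennreal_leI) auto
    qed
    also have "\<dots> \<le> (\<Sum>j. Mmat P i j * ennreal (u j))"
      by (intro sum_le_suminf) auto
    also have "\<dots> = ennreal (u i)"
      by (rule u_right_eigen)
    also have "\<dots> \<le> ennreal U" using U[of i] by (simp add: ennreal_leI)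
    finally show ?thesis .
  qed
  have "Mrow P i \<le> ennreal (2 * U / d)" for i
    using Mrow_le_of_head_le[OF tail finite_row head d_pos] U_pos by simp
  with d_pos U_pos show ?thesis by (intro exI[of _ "2 * U / d"]) auto
qed

lemma Mmult_le_Mtail:
  assumes x: "\<And>j. 0 \<le> x j \<and> x j \<le> 1" and head: "\<And>j. j \<le> N \<Longrightarrow> x j \<le> e"
  shows "Mmult P i x \<le> ennreal e * Mrow P i + Mtail P N i"
proof -
  have "Mmult P i x \<le> (\<Sum>j. Mmat P i j * ennreal e + (if j > N then Mmat P i j else 0))"
    unfolding Mmult_def
  proof (intro suminf_le)
    show "Mmat P i j * ennreal (x j) \<le> Mmat P i j * ennreal e + (if j > N then Mmat P i j else 0)" for j
    proof (cases "j \<le> N")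
      case True
      then show ?thesis using head[OF True] by (simp add: mult_left_mono ennreal_leI add_increasing2)
    next
      case False
      have "Mmat P i j * ennreal (x j) \<le> Mmat P i j * 1"
        using x[of j] by (intro mult_left_mono) (auto simp: ennreal_le_1)
      then show ?thesis using False by (simp add: add_increasing)
    qed
  qed auto
  also have "\<dots> = ennreal e * Mrow P i + Mtail P N i"
    unfolding Mrow_def Mtail_def by (simp add: suminf_add[symmetric] ennreal_suminf_multc mult.commute)
  finally show ?thesis .
qed

lemma in_M1_irreducible: "in_M1 P \<Longrightarrow> \<exists>n. Mpow P n i j > 0"
  unfolding in_M1_def by (elim conjE) blast

lemma in_M1_eigenvectors:
  assumes "in_M1 P"
  obtains v u :: "nat \<Rightarrow> real" where
    "\<And>j. v j > 0" "\<And>j. (\<Sum>i. ennreal (v i) * Mmat P i j) = ennreal (v j)"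
    "(\<Sum>j. ennreal (v j)) = 1"
    "\<And>i. u i > 0" "\<And>i. (\<Sum>j. Mmat P i j * ennreal (u j)) = ennreal (u i)"
    "bdd_above (range u)"
proof -
  obtain v u :: "nat \<Rightarrow> real" where
    "\<forall>j. v j > 0" "\<forall>i. u i > 0"
    "\<forall>j. (\<Sum>i. ennreal (v i) * Mmat P i j) = ennreal (v j)"
    "\<forall>i. (\<Sum>j. Mmat P i j * ennreal (u j)) = ennreal (u i)"
    "(\<Sum>j. ennreal (v j)) = 1" "bdd_above (range u)"
    using assms unfolding in_M1_def by (elim conjE exE) blast
  then show thesis by (intro that) auto
qed

lemma in_M1_Mtail:
  assumes "in_M1 P" "\<epsilon> > 0"
  shows "\<exists>N. \<forall>i. Mtail P N i \<le> ennreal \<epsilon> * Mrow P i"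
proof -
  have "\<forall>\<epsilon>::real. \<epsilon> > 0 \<longrightarrow> (\<exists>N0. \<forall>N\<ge>N0. \<forall>i. Mtail P N i \<le> ennreal \<epsilon> * Mrow P i)"
    using assms(1) unfolding in_M1_def Mtail_def by (elim conjE)
  with assms(2) show ?thesis by blast
qed

lemma uniform_extinction:
  assumes fo: "\<And>i z. z \<in> set_pmf (P i) \<Longrightarrow> finite (supp z)"
    and row_bound: "\<And>i. Mrow P i \<le> ennreal B" and "0 \<le> B"
    and tail: "\<And>\<epsilon>. \<epsilon> > 0 \<Longrightarrow> \<exists>N. \<forall>i. Mtail P N i \<le> ennreal \<epsilon> * Mrow P i"
    and lim: "\<And>j. (\<lambda>n. extinct_prob P n j) \<longlonglongrightarrow> 1"
    and "\<epsilon> > 0"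
  shows "\<exists>n0. \<forall>n\<ge>n0. \<forall>i. 1 - extinct_prob P n i < \<epsilon>"
proof -
  define e where "e = \<epsilon> / (2 * B + 1)"
  have e_pos: "e > 0" using \<open>\<epsilon> > 0\<close> \<open>0 \<le> B\<close> by (simp add: e_def)
  have "2 * e * B = \<epsilon> * (2 * B) / (2 * B + 1)" by (simp add: e_def)
  also have "\<dots> < \<epsilon>" using \<open>\<epsilon> > 0\<close> \<open>0 \<le> B\<close> by (simp add: divide_less_eq)
  finally have small: "2 * e * B < \<epsilon>" .
  obtain N where N: "\<And>i. Mtail P N i \<le> ennreal e * Mrow P i"
    using tail[OF e_pos] by blast
  have "eventually (\<lambda>n. \<forall>j\<in>{..N}. 1 - extinct_prob P n j < e) sequentially"
  proof (intro eventually_ball_finite ballI)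
    fix j
    show "eventually (\<lambda>n. 1 - extinct_prob P n j < e) sequentially"
      using tendstoD[OF lim[of j] e_pos] by eventually_elim (auto simp: dist_real_def)
  qed auto
  then obtain m0 where m0: "\<And>m j. m \<ge> m0 \<Longrightarrow> j \<le> N \<Longrightarrow> 1 - extinct_prob P m j < e"
    unfolding eventually_sequentially by blast
  have Suc_m: "1 - extinct_prob P (Suc m) i < \<epsilon>" if "m \<ge> m0" for m i
  proof -
    let ?x = "\<lambda>j. 1 - extinct_prob P m j"
    have x: "\<And>j. 0 \<le> ?x j \<and> ?x j \<le> 1"
      using extinct_prob_bounds[OF fo] by auto
    have "ennreal (1 - extinct_prob P (Suc m) i)
        = ennreal (1 - measure_pmf.expectation (P i) (powprod (\<lambda>j. 1 - ?x j)))"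
      by (simp add: extinct_prob_Suc[OF fo])
    also have "\<dots> \<le> Mmult P i ?x"
      using fo x by (intro one_minus_expectation_powprod_le_Mmult) auto
    also have "\<dots> \<le> ennreal e * Mrow P i + Mtail P N i"
      using x m0[OF that] by (intro Mmult_le_Mtail) (auto intro: less_imp_le)
    also have "\<dots> \<le> ennreal e * ennreal B + ennreal e * ennreal B"
    proof (rule add_mono)
      show "ennreal e * Mrow P i \<le> ennreal e * ennreal B"
        using row_bound by (rule mult_left_mono) simp
      then show "Mtail P N i \<le> ennreal e * ennreal B"
        using N[of i] by (rule order_trans[rotated])
    qed
    also have "\<dots> = ennreal (2 * e * B)"
      using e_pos \<open>0 \<le> B\<close> by (simp flip: ennreal_mult ennreal_plus del: ennreal_plus)
    finally have "1 - extinct_prob P (Suc m) i \<le> 2 * e * B"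
      using e_pos \<open>0 \<le> B\<close> by (subst (asm) ennreal_le_iff) auto
    with small show ?thesis by linarith
  qed
  show ?thesis
  proof (intro exI[of _ "Suc m0"] allI impI)
    fix n i assume "n \<ge> Suc m0"
    then obtain m where "n = Suc m" "m \<ge> m0" by (cases n) auto
    then show "1 - extinct_prob P n i < \<epsilon>" using Suc_m by simp
  qed
qed

theorem lemma4:
  fixes P :: "nat \<Rightarrow> (nat \<Rightarrow> nat) pmf"
  assumes finite_offspring: "\<And>i z. z \<in> set_pmf (P i) \<Longrightarrow> finite (supp z)"
    and M1: "in_M1 P"
    and nonlinear: "\<not> (\<forall>i s. (\<forall>j. 0 \<le> s j \<and> s j \<le> 1) \<longrightarrow>
                         ennreal (F1 P i s) = (\<Sum>j. Mmat P i j * ennreal (s j)))"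
  shows "\<forall>\<epsilon>>0. \<exists>N. \<forall>n\<ge>N. \<forall>i. \<forall>s. (\<forall>j. 0 < s j \<and> s j \<le> 1) \<longrightarrow>
           \<bar>Fgen P n i s - 1\<bar> < \<epsilon>"
proof (intro allI impI)
  fix \<epsilon> :: real assume "\<epsilon> > 0"
  note fo = finite_offspring
  obtain v u :: "nat \<Rightarrow> real" where
    v: "\<And>j. v j > 0" "\<And>j. (\<Sum>i. ennreal (v i) * Mmat P i j) = ennreal (v j)"
      "(\<Sum>j. ennreal (v j)) = 1"
    and u: "\<And>i. u i > 0" "\<And>i. (\<Sum>j. Mmat P i j * ennreal (u j)) = ennreal (u i)"
      "bdd_above (range u)"
    using M1 by (rule in_M1_eigenvectors) blast
  obtain N where "\<And>i. Mtail P N i \<le> ennreal (1/2) * Mrow P i"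
    using in_M1_Mtail[OF M1, of "1/2"] by auto
  then obtain B where "B > 0" and row_bound: "\<And>i. Mrow P i \<le> ennreal B"
    using Mrow_bounded[OF u _ Mrow_neq_top[OF v]] by blast
  have "(\<lambda>n. extinct_prob P n j) \<longlonglongrightarrow> 1" for j
    using LIMSEQ_extinct_prob[where P = P, OF fo]
      extinct_prob_lim_eq_one[where P = P, OF fo in_M1_irreducible[OF M1] v nonlinear] by simp
  then have "\<exists>n0. \<forall>n\<ge>n0. \<forall>i. 1 - extinct_prob P n i < \<epsilon>"
    using fo row_bound \<open>B > 0\<close> in_M1_Mtail[OF M1] \<open>\<epsilon> > 0\<close>
    by (intro uniform_extinction[where B = B]) auto
  then obtain n0 where n0: "\<And>n i. n \<ge> n0 \<Longrightarrow> 1 - extinct_prob P n i < \<epsilon>"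
    by blast
  show "\<exists>N. \<forall>n\<ge>N. \<forall>i s. (\<forall>j. 0 < s j \<and> s j \<le> 1) \<longrightarrow> \<bar>Fgen P n i s - 1\<bar> < \<epsilon>"
  proof (intro exI[of _ n0] allI impI)
    fix n i :: nat and s :: "nat \<Rightarrow> real"
    assume "n \<ge> n0" and s_pos: "\<forall>j. 0 < s j \<and> s j \<le> 1"
    have s: "0 \<le> s j \<and> s j \<le> 1" for j
      using s_pos[rule_format, of j] by simp
    have "\<bar>Fgen P n i s - 1\<bar> \<le> 1 - extinct_prob P n i"
      by (rule abs_Fgen_minus_one_le) (fact fo, fact s)
    with n0[OF \<open>n \<ge> n0\<close>, of i] show "\<bar>Fgen P n i s - 1\<bar> < \<epsilon>" by linarith
  qed
qed

end
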